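(* Let $k\ge1$ and $\delta\notin I_k=\{-\frac{p}{2(n+1)}:p\in\{k-1,\dots,2k-2\}\}$. Define $s_{k-1}:R^{k-1}\to R^k$ by $s_{k-1}(S)=-\sum_{l=1}^kb_{k,l}\,X^l\big(i(\alpha)^{l-1}(S)\big)$, where $b_{k,l}=\big(\prod_{j=1}^l(-r(j,k-j))\big)^{-1}$. Then $i(\alpha)\circ s_{k-1}=\mathrm{Id}$ on $R^{k-1}$.
   Context: Let $n\ge1$, $M=\mathbb{R}^{2n+1}$ with coordinates $(q^1,\dots,q^n,p^1,\dots,p^n,t)$. For $\mu\in\mathbb{R}$, $\mathcal{S}^k_\mu$ denotes the space of smooth functions $S(x,\xi)$ on $M\times\mathbb{R}^{2n+1}$ homogeneous polynomial of degree $k$ in $\xi=(\xi_{q^1},\dots,\xi_{q^n},\xi_{p^1},\dots,\xi_{p^n},\xi_t)$. Fix $\delta\in\mathbb{R}$ and set $R^k=\mathcal{S}^k_{\delta+\frac{k}{n+1}}$ for $k\ge0$, $R^{j}=0$ for $j<0$. Let $E_s=\sum_i(p^i\partial_{p^i}+q^i\partial_{q^i})$, $\langle E_s,\xi\rangle=\sum_i(p^i\xi_{p^i}+q^i\xi_{q^i})$, $D(S)=\sum_i(\xi_{q^i}\partial_{p^i}S-\xi_{p^i}\partial_{q^i}S)+\xi_tE_s(S)-\langle E_s,\xi\rangle\partial_tS$. Operators: $i(\alpha):R^k\to R^{k-1}$, $i(\alpha)(S)=\frac12\big(\sum_i(p^i\partial_{\xi_{q^i}}S-q^i\partial_{\xi_{p^i}}S)-\partial_{\xi_t}S\big)$;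 $X:R^k\to R^{k+1}$, $X(S)=D(S)+(2(n+1)\delta+k)\xi_tS$. Set $r(l,k)=-\frac{l}{2}\big(2(n+1)\delta+2k+l-1\big)$ (for $\delta\notin I_k$ the numbers $r(j,k-j)$, $1\le j\le k$, are nonzero). *)

theory Defs
  imports "HOL-Analysis.Analysis"
begin

text \<open>Points of M = R^(2n+1) with coordinates (q^1..q^n, p^1..p^n, t); n = CARD('n).
  The same type is used for the dual variable xi = (xi_q, xi_p, xi_t).\<close>
type_synonym 'n pt = "(real^'n) \<times> (real^'n) \<times> real"
type_synonym 'n sym = "'n pt \<Rightarrow> 'n pt \<Rightarrow> real"

definition qc :: "'n::finite pt \<Rightarrow> 'n \<Rightarrow> real" where "qc x i = fst x $ i"
definition pc :: "'n::finite pt \<Rightarrow> 'n \<Rightarrow> real" where "pc x i = fst (snd x) $ i"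
definition tc :: "'n::finite pt \<Rightarrow> real" where "tc x = snd (snd x)"

definition eq :: "'n::finite \<Rightarrow> 'n pt" where "eq i = (axis i 1, 0, 0)"
definition ep :: "'n::finite \<Rightarrow> 'n pt" where "ep i = (0, axis i 1, 0)"
definition et :: "'n::finite pt" where "et = (0, 0, 1)"

definition dX :: "'n::finite pt \<Rightarrow> 'n sym \<Rightarrow> 'n sym" where
  "dX v S = (\<lambda>x xi. deriv (\<lambda>h. S (x + h *\<^sub>R v) xi) 0)"
definition dXi :: "'n::finite pt \<Rightarrow> 'n sym \<Rightarrow> 'n sym" where
  "dXi v S = (\<lambda>x xi. deriv (\<lambda>h. S x (xi + h *\<^sub>R v)) 0)"

fun iter_pd :: "'a list \<Rightarrow> ('a::real_normed_vector \<Rightarrow> real) \<Rightarrow> 'a \<Rightarrow> real" where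
  "iter_pd [] f = f"
| "iter_pd (v # vs) f = (\<lambda>z. deriv (\<lambda>h. iter_pd vs f (z + h *\<^sub>R v)) 0)"

definition smooth :: "('a::euclidean_space \<Rightarrow> real) \<Rightarrow> bool" where
  "smooth f \<longleftrightarrow> (\<forall>vs. set vs \<subseteq> Basis \<longrightarrow>
      continuous_on UNIV (iter_pd vs f) \<and>
      (\<forall>b\<in>Basis. \<forall>z. (\<lambda>h. iter_pd vs f (z + h *\<^sub>R b)) differentiable (at 0)))"

definition multiidx :: "nat \<Rightarrow> ('n::finite pt \<Rightarrow> nat) set" where
  "multiidx k = {\<alpha>. (\<forall>b. b \<notin> Basis \<longrightarrow> \<alpha> b = 0) \<and> (\<Sum>b\<in>Basis. \<alpha> b) = k}"

definition monom :: "('n::finite pt \<Rightarrow> nat) \<Rightarrow> 'n pt \<Rightarrow> real" where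
  "monom \<alpha> xi = (\<Prod>b\<in>Basis. (xi \<bullet> b) ^ (\<alpha> b))"

definition hom_poly :: "nat \<Rightarrow> 'n::finite sym \<Rightarrow> bool" where
  "hom_poly k S \<longleftrightarrow> (\<exists>c. \<forall>x xi. S x xi = (\<Sum>\<alpha>\<in>multiidx k. c \<alpha> x * monom \<alpha> xi))"

text \<open>R^k = S^k_{delta + k/(n+1)} as a space of functions (the weight only affects the action).\<close>
definition Rsp :: "nat \<Rightarrow> 'n::finite sym set" where
  "Rsp k = {S. smooth (\<lambda>(x, xi). S x xi) \<and> hom_poly k S}"

definition Es :: "'n::finite sym \<Rightarrow> 'n sym" where
  "Es S = (\<lambda>x xi. \<Sum>i\<in>UNIV. pc x i * dX (ep i) S x xi + qc x i * dX (eq i) S x xi)"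

definition Es_xi :: "'n::finite pt \<Rightarrow> 'n pt \<Rightarrow> real" where
  "Es_xi x xi = (\<Sum>i\<in>UNIV. pc x i * pc xi i + qc x i * qc xi i)"

definition Dop :: "'n::finite sym \<Rightarrow> 'n sym" where
  "Dop S = (\<lambda>x xi. (\<Sum>i\<in>UNIV. qc xi i * dX (ep i) S x xi - pc xi i * dX (eq i) S x xi)
       + tc xi * Es S x xi - Es_xi x xi * dX et S x xi)"

definition Xop :: "real \<Rightarrow> nat \<Rightarrow> 'n::finite sym \<Rightarrow> 'n sym" where
  "Xop \<delta> k S = (\<lambda>x xi. Dop S x xi
       + (2 * (real CARD('n) + 1) * \<delta> + real k) * tc xi * S x xi)"

text \<open>Xpow d m l S = X^l S for S in R^m (X applied successively on R^m, ..., R^(m+l-1)).\<close>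
primrec Xpow :: "real \<Rightarrow> nat \<Rightarrow> nat \<Rightarrow> 'n::finite sym \<Rightarrow> 'n sym" where
  "Xpow \<delta> m 0 S = S"
| "Xpow \<delta> m (Suc l) S = Xop \<delta> (m + l) (Xpow \<delta> m l S)"

definition ia :: "'n::finite sym \<Rightarrow> 'n sym" where
  "ia S = (\<lambda>x xi. (1/2) * ((\<Sum>i\<in>UNIV. pc x i * dXi (eq i) S x xi - qc x i * dXi (ep i) S x xi)
       - dXi et S x xi))"

definition rr :: "nat \<Rightarrow> real \<Rightarrow> nat \<Rightarrow> nat \<Rightarrow> real" where
  "rr n \<delta> l k = - (real l / 2) * (2 * (real n + 1) * \<delta> + 2 * real k + real l - 1)"

definition bb :: "nat \<Rightarrow> real \<Rightarrow> nat \<Rightarrow> nat \<Rightarrow> real" where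
  "bb n \<delta> k l = inverse (\<Prod>j=1..l. - rr n \<delta> j (k - j))"

definition Iset :: "nat \<Rightarrow> nat \<Rightarrow> real set" where
  "Iset n k = {- real p / (2 * (real n + 1)) | p. p \<in> {k - 1 .. 2 * k - 2}}"

text \<open>s_op d k = s_(k-1) : R^(k-1) -> R^k.\<close>
definition s_op :: "real \<Rightarrow> nat \<Rightarrow> 'n::finite sym \<Rightarrow> 'n sym" where
  "s_op \<delta> k S = (\<lambda>x xi. - (\<Sum>l=1..k. bb CARD('n) \<delta> k l * Xpow \<delta> (k - l) l ((ia ^^ (l - 1)) S) x xi))"

end

theory Submission
  imports Defs
begin

(*
  On symbols homogeneous of degree m in xi the operators satisfy the commutator identity
    i(alpha) X - X i(alpha) = -((n+1) delta + m) Id.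
  It rests on two facts: contracting the xi-linear coefficients of D with alpha gives zero, and
  Euler's identity sum_b xi_b d_(xi_b) S = m S.  Iterating it gives
    i(alpha) X^l = X^l i(alpha) + r(l,m) X^(l-1)   on R^m,
  so i(alpha) maps the l-th term of s_(k-1)(S) to b_(k,l-1) X^(l-1) i(alpha)^(l-1) S - b_(k,l) X^l i(alpha)^l S,
  because -b_(k,l) r(l,k-l) = b_(k,l-1) (here r(l,k-l) is nonzero by the hypothesis on delta).
  The sum telescopes to S, as i(alpha)^k S = 0 for S in R^(k-1).

  To compute derivatives, R^m is embedded, via Euler's identity, into an inductively generated class
  of symbols that are polynomial in xi with smooth coefficients, where derivatives obey rules.
*)

lemma qc_eq_inner: "qc x i = x \<bullet> eq i"
  by (simp add: qc_def eq_def inner_prod_def inner_axis)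

lemma pc_eq_inner: "pc x i = x \<bullet> ep i"
  by (simp add: pc_def ep_def inner_prod_def inner_axis)

lemma tc_eq_inner: "tc x = x \<bullet> et"
  by (simp add: tc_def et_def inner_prod_def)

lemma eq_in_Basis: "eq i \<in> Basis"
  unfolding eq_def Basis_prod_def by (intro UnI1 image_eqI[where x="axis i 1"]) (auto simp: zero_prod_def)

lemma ep_in_Basis: "ep i \<in> Basis"
  unfolding ep_def Basis_prod_def
  by (intro UnI2 image_eqI[where x="(axis i 1, 0)"] UnI1) (auto simp: zero_prod_def)

lemma et_in_Basis: "et \<in> Basis"
  unfolding et_def Basis_prod_def
  by (intro UnI2 image_eqI[where x="(0, 1)"]) (auto simp: zero_prod_def Basis_prod_def)

lemma inner_coordinate_vectors [simp]:
  "eq i \<bullet> eq j = (if i = j then 1 else 0)" "ep i \<bullet> ep j = (if i = j then 1 else 0)"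
  "eq i \<bullet> ep j = 0" "ep i \<bullet> eq j = 0" "eq i \<bullet> et = 0" "et \<bullet> eq i = 0"
  "ep i \<bullet> et = 0" "et \<bullet> ep i = 0" "et \<bullet> et = 1"
  by (auto simp: eq_def ep_def et_def inner_prod_def inner_axis_axis)

lemma sum_Basis_pt:
  fixes f :: "'n::finite pt \<Rightarrow> 'a::comm_monoid_add"
  shows "(\<Sum>b\<in>Basis. f b) = (\<Sum>i\<in>UNIV. f (eq i) + f (ep i)) + f et"
proof -
  have vec: "(Basis :: (real^'n) set) = range (\<lambda>i. axis i 1)"
    by (auto simp: Basis_vec_def)
  have "(\<Sum>b\<in>Basis. f b) = (\<Sum>u\<in>Basis. f (u, 0)) + ((\<Sum>u\<in>Basis. f (0, u, 0)) + f et)"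
    unfolding Basis_prod_def et_def
    by (subst sum.union_disjoint; auto simp: sum.reindex inj_on_def image_image image_iff add.commute)+
  also have "\<dots> = (\<Sum>i\<in>UNIV. f (eq i) + f (ep i)) + f et"
    unfolding vec eq_def ep_def
    by (simp add: sum.reindex inj_on_def axis_eq_axis sum.distrib zero_prod_def add.assoc)
  finally show ?thesis .
qed

section \<open>Directional derivatives\<close>

definition dir_deriv :: "'a::real_normed_vector \<Rightarrow> ('a \<Rightarrow> real) \<Rightarrow> 'a \<Rightarrow> real" where
  "dir_deriv v f z = deriv (\<lambda>h. f (z + h *\<^sub>R v)) 0"

definition has_dir_deriv :: "'a::real_normed_vector \<Rightarrow> ('a \<Rightarrow> real) \<Rightarrow> ('a \<Rightarrow> real) \<Rightarrow> bool" where
  "has_dir_deriv v f f' \<longleftrightarrow> (\<forall>z. ((\<lambda>h. f (z + h *\<^sub>R v)) has_real_derivative f' z) (at 0))"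

lemma dir_deriv_eqI: "has_dir_deriv v f f' \<Longrightarrow> dir_deriv v f = f'"
  unfolding has_dir_deriv_def dir_deriv_def by (blast intro: DERIV_imp_deriv)

lemma has_dir_deriv_const: "has_dir_deriv v (\<lambda>z. c) (\<lambda>z. 0)"
  by (simp add: has_dir_deriv_def)

lemma has_dir_deriv_inner: "has_dir_deriv v (\<lambda>z. z \<bullet> e) (\<lambda>z. v \<bullet> e)"
  unfolding has_dir_deriv_def inner_add_left inner_scaleR_left
  by (auto intro!: derivative_eq_intros)

lemma has_dir_deriv_add:
  "has_dir_deriv v f f' \<Longrightarrow> has_dir_deriv v g g' \<Longrightarrow> has_dir_deriv v (\<lambda>z. f z + g z) (\<lambda>z. f' z + g' z)"
  unfolding has_dir_deriv_def by (intro allI DERIV_add) auto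

lemma has_dir_deriv_diff:
  "has_dir_deriv v f f' \<Longrightarrow> has_dir_deriv v g g' \<Longrightarrow> has_dir_deriv v (\<lambda>z. f z - g z) (\<lambda>z. f' z - g' z)"
  unfolding has_dir_deriv_def by (intro allI DERIV_diff) auto

lemma has_dir_deriv_mult:
  "has_dir_deriv v f f' \<Longrightarrow> has_dir_deriv v g g' \<Longrightarrow>
    has_dir_deriv v (\<lambda>z. f z * g z) (\<lambda>z. f' z * g z + f z * g' z)"
  unfolding has_dir_deriv_def by (auto intro!: derivative_eq_intros)

lemma has_dir_deriv_cmult: "has_dir_deriv v f f' \<Longrightarrow> has_dir_deriv v (\<lambda>z. c * f z) (\<lambda>z. c * f' z)"
  unfolding has_dir_deriv_def by (intro allI DERIV_cmult) auto

lemma has_dir_deriv_sum: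
  "(\<And>i. i \<in> I \<Longrightarrow> has_dir_deriv v (f i) (f' i)) \<Longrightarrow>
    has_dir_deriv v (\<lambda>z. \<Sum>i\<in>I. f i z) (\<lambda>z. \<Sum>i\<in>I. f' i z)"
  unfolding has_dir_deriv_def by (intro allI DERIV_sum) auto

definition deriv_x :: "'a::real_normed_vector \<Rightarrow> ('a \<Rightarrow> 'b \<Rightarrow> real) \<Rightarrow> 'a \<Rightarrow> 'b \<Rightarrow> real" where
  "deriv_x w T = (\<lambda>x xi. dir_deriv w (\<lambda>y. T y xi) x)"

definition deriv_xi :: "'b::real_normed_vector \<Rightarrow> ('a \<Rightarrow> 'b \<Rightarrow> real) \<Rightarrow> 'a \<Rightarrow> 'b \<Rightarrow> real" where
  "deriv_xi v T = (\<lambda>x. dir_deriv v (T x))"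

definition has_deriv_x :: "'a::real_normed_vector \<Rightarrow> ('a \<Rightarrow> 'b \<Rightarrow> real) \<Rightarrow> ('a \<Rightarrow> 'b \<Rightarrow> real) \<Rightarrow> bool" where
  "has_deriv_x w T T' \<longleftrightarrow> (\<forall>xi. has_dir_deriv w (\<lambda>y. T y xi) (\<lambda>y. T' y xi))"

definition has_deriv_xi :: "'b::real_normed_vector \<Rightarrow> ('a \<Rightarrow> 'b \<Rightarrow> real) \<Rightarrow> ('a \<Rightarrow> 'b \<Rightarrow> real) \<Rightarrow> bool" where
  "has_deriv_xi v T T' \<longleftrightarrow> (\<forall>x. has_dir_deriv v (T x) (T' x))"

lemma dX_eq_deriv_x: "dX = deriv_x"
  by (simp add: fun_eq_iff dX_def deriv_x_def dir_deriv_def)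

lemma dXi_eq_deriv_xi: "dXi = deriv_xi"
  by (simp add: fun_eq_iff dXi_def deriv_xi_def dir_deriv_def)

lemma deriv_x_eqI: "has_deriv_x w T T' \<Longrightarrow> deriv_x w T = T'"
proof (intro ext)
  fix x xi
  assume "has_deriv_x w T T'"
  then have "dir_deriv w (\<lambda>y. T y xi) = (\<lambda>y. T' y xi)"
    unfolding has_deriv_x_def by (blast intro: dir_deriv_eqI)
  then show "deriv_x w T x xi = T' x xi"
    unfolding deriv_x_def by simp
qed

lemma deriv_xi_eqI: "has_deriv_xi v T T' \<Longrightarrow> deriv_xi v T = T'"
proof (intro ext)
  fix x xi
  assume "has_deriv_xi v T T'"
  then have "dir_deriv v (T x) = T' x"
    unfolding has_deriv_xi_def by (blast intro: dir_deriv_eqI)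
  then show "deriv_xi v T x xi = T' x xi"
    unfolding deriv_xi_def by simp
qed

lemma has_deriv_x_cong:
  assumes "has_deriv_x w T T'" and "\<And>x xi. T' x xi = T'' x xi"
  shows "has_deriv_x w T T''"
proof -
  have "T' = T''"
    using assms(2) by (intro ext)
  then show ?thesis
    using assms(1) by simp
qed

lemma has_deriv_xi_cong:
  assumes "has_deriv_xi v T T'" and "\<And>x xi. T' x xi = T'' x xi"
  shows "has_deriv_xi v T T''"
proof -
  have "T' = T''"
    using assms(2) by (intro ext)
  then show ?thesis
    using assms(1) by simp
qed

lemma has_deriv_x_fibre: "has_deriv_x w (\<lambda>x xi. f xi) (\<lambda>x xi. 0)"
  unfolding has_deriv_x_def by (simp add: has_dir_deriv_const)

lemma has_deriv_xi_base: "has_deriv_xi v (\<lambda>x xi. f x) (\<lambda>x xi. 0)"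
  unfolding has_deriv_xi_def by (simp add: has_dir_deriv_const)

lemma has_deriv_x_inner: "has_deriv_x w (\<lambda>x xi. x \<bullet> e) (\<lambda>x xi. w \<bullet> e)"
  unfolding has_deriv_x_def by (simp add: has_dir_deriv_inner)

lemma has_deriv_xi_inner: "has_deriv_xi v (\<lambda>x xi. xi \<bullet> e) (\<lambda>x xi. v \<bullet> e)"
  unfolding has_deriv_xi_def by (simp add: has_dir_deriv_inner)

lemma has_deriv_x_add:
  "has_deriv_x w T T' \<Longrightarrow> has_deriv_x w U U' \<Longrightarrow>
    has_deriv_x w (\<lambda>x xi. T x xi + U x xi) (\<lambda>x xi. T' x xi + U' x xi)"
  unfolding has_deriv_x_def by (simp add: has_dir_deriv_add)

lemma has_deriv_xi_add:
  "has_deriv_xi v T T' \<Longrightarrow> has_deriv_xi v U U' \<Longrightarrow>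
    has_deriv_xi v (\<lambda>x xi. T x xi + U x xi) (\<lambda>x xi. T' x xi + U' x xi)"
  unfolding has_deriv_xi_def by (simp add: has_dir_deriv_add)

lemma has_deriv_x_diff:
  "has_deriv_x w T T' \<Longrightarrow> has_deriv_x w U U' \<Longrightarrow>
    has_deriv_x w (\<lambda>x xi. T x xi - U x xi) (\<lambda>x xi. T' x xi - U' x xi)"
  unfolding has_deriv_x_def by (simp add: has_dir_deriv_diff)

lemma has_deriv_xi_diff:
  "has_deriv_xi v T T' \<Longrightarrow> has_deriv_xi v U U' \<Longrightarrow>
    has_deriv_xi v (\<lambda>x xi. T x xi - U x xi) (\<lambda>x xi. T' x xi - U' x xi)"
  unfolding has_deriv_xi_def by (simp add: has_dir_deriv_diff)

lemma has_deriv_x_mult: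
  "has_deriv_x w T T' \<Longrightarrow> has_deriv_x w U U' \<Longrightarrow>
    has_deriv_x w (\<lambda>x xi. T x xi * U x xi) (\<lambda>x xi. T' x xi * U x xi + T x xi * U' x xi)"
  unfolding has_deriv_x_def by (simp add: has_dir_deriv_mult)

lemma has_deriv_xi_mult:
  "has_deriv_xi v T T' \<Longrightarrow> has_deriv_xi v U U' \<Longrightarrow>
    has_deriv_xi v (\<lambda>x xi. T x xi * U x xi) (\<lambda>x xi. T' x xi * U x xi + T x xi * U' x xi)"
  unfolding has_deriv_xi_def by (simp add: has_dir_deriv_mult)

lemma has_deriv_x_cmult: "has_deriv_x w T T' \<Longrightarrow> has_deriv_x w (\<lambda>x xi. c * T x xi) (\<lambda>x xi. c * T' x xi)"
  unfolding has_deriv_x_def by (simp add: has_dir_deriv_cmult)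

lemma has_deriv_xi_cmult: "has_deriv_xi v T T' \<Longrightarrow> has_deriv_xi v (\<lambda>x xi. c * T x xi) (\<lambda>x xi. c * T' x xi)"
  unfolding has_deriv_xi_def by (simp add: has_dir_deriv_cmult)

lemma has_deriv_x_sum:
  "(\<And>i. i \<in> I \<Longrightarrow> has_deriv_x w (T i) (T' i)) \<Longrightarrow>
    has_deriv_x w (\<lambda>x xi. \<Sum>i\<in>I. T i x xi) (\<lambda>x xi. \<Sum>i\<in>I. T' i x xi)"
  unfolding has_deriv_x_def by (simp add: has_dir_deriv_sum)

lemma has_deriv_xi_sum:
  "(\<And>i. i \<in> I \<Longrightarrow> has_deriv_xi v (T i) (T' i)) \<Longrightarrow>
    has_deriv_xi v (\<lambda>x xi. \<Sum>i\<in>I. T i x xi) (\<lambda>x xi. \<Sum>i\<in>I. T' i x xi)"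
  unfolding has_deriv_xi_def by (simp add: has_dir_deriv_sum)

section \<open>Smooth coefficients\<close>

coinductive partially_smooth :: "('a::euclidean_space \<Rightarrow> real) \<Rightarrow> bool" where
  "(\<forall>b\<in>Basis. has_dir_deriv b c (dir_deriv b c) \<and> partially_smooth (dir_deriv b c)) \<Longrightarrow>
    partially_smooth c"

lemma partially_smooth_has_dir_deriv: "partially_smooth c \<Longrightarrow> b \<in> Basis \<Longrightarrow> has_dir_deriv b c (dir_deriv b c)"
  by (erule partially_smooth.cases) blast

lemma partially_smooth_dir_deriv: "partially_smooth c \<Longrightarrow> b \<in> Basis \<Longrightarrow> partially_smooth (dir_deriv b c)"
  by (erule partially_smooth.cases) blast

lemma partially_smooth_const: "partially_smooth (\<lambda>x. a)"
proof -
  have "dir_deriv b (\<lambda>x. a') = (\<lambda>x. 0)" for b a'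
    by (rule dir_deriv_eqI[OF has_dir_deriv_const])
  then show ?thesis
    by (coinduction arbitrary: a rule: partially_smooth.coinduct) (auto simp: has_dir_deriv_const)
qed

lemma partially_smooth_iter_pd:
  fixes F :: "'a::euclidean_space \<times> 'b::euclidean_space \<Rightarrow> real"
  assumes smooth: "smooth F" and "set vs \<subseteq> Basis"
  shows "partially_smooth (\<lambda>x. iter_pd vs F (x, y))"
  using assms(2)
proof (coinduction arbitrary: vs rule: partially_smooth.coinduct)
  case (partially_smooth vs)
  have shift: "(x, y) + h *\<^sub>R (b, 0) = (x + h *\<^sub>R b, y)" for x h and b :: 'a
    by simp
  have "has_dir_deriv b (\<lambda>x. iter_pd vs F (x, y)) (dir_deriv b (\<lambda>x. iter_pd vs F (x, y))) \<and>
      dir_deriv b (\<lambda>x. iter_pd vs F (x, y)) = (\<lambda>x. iter_pd ((b, 0) # vs) F (x, y)) \<and>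
      set ((b, 0) # vs) \<subseteq> Basis" if b: "b \<in> Basis" for b
  proof (intro conjI)
    have b0: "(b, 0) \<in> (Basis :: ('a \<times> 'b) set)"
      using b by (auto simp: Basis_prod_def)
    then show "set ((b, 0) # vs) \<subseteq> Basis"
      using partially_smooth by simp
    have "(\<lambda>h. iter_pd vs F ((x, y) + h *\<^sub>R (b, 0))) differentiable (at 0)" for x
      using smooth partially_smooth b0 unfolding smooth_def by blast
    then show "has_dir_deriv b (\<lambda>x. iter_pd vs F (x, y)) (dir_deriv b (\<lambda>x. iter_pd vs F (x, y)))"
      unfolding has_dir_deriv_def dir_deriv_def shift by (simp add: DERIV_deriv_iff_real_differentiable)
    show "dir_deriv b (\<lambda>x. iter_pd vs F (x, y)) = (\<lambda>x. iter_pd ((b, 0) # vs) F (x, y))"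
      by (simp add: dir_deriv_def fun_eq_iff)
  qed
  then show ?case
    by blast
qed

section \<open>Symbols polynomial in the fibre variable\<close>

inductive homog :: "nat \<Rightarrow> ('a::euclidean_space \<Rightarrow> 'b::euclidean_space \<Rightarrow> real) \<Rightarrow> bool" where
  homog_zero: "homog m (\<lambda>x xi. 0)"
| homog_coeff: "partially_smooth c \<Longrightarrow> homog 0 (\<lambda>x xi. c x)"
| homog_xi: "homog m T \<Longrightarrow> homog (Suc m) (\<lambda>x xi. (xi \<bullet> e) * T x xi)"
| homog_x: "homog m T \<Longrightarrow> homog m (\<lambda>x xi. (x \<bullet> e) * T x xi)"
| homog_add: "homog m T \<Longrightarrow> homog m U \<Longrightarrow> homog m (\<lambda>x xi. T x xi + U x xi)"
| homog_cmult: "homog m T \<Longrightarrow> homog m (\<lambda>x xi. a * T x xi)"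

text \<open>Sums of homogeneous symbols of possibly different degrees: the derivative rules below are stated for
  this class so that the simplifier can discharge their side conditions.\<close>

inductive poly_symbol :: "('a::euclidean_space \<Rightarrow> 'b::euclidean_space \<Rightarrow> real) \<Rightarrow> bool" where
  poly_symbol_homog [simp]: "homog m T \<Longrightarrow> poly_symbol T"
| poly_symbol_add [simp]: "poly_symbol T \<Longrightarrow> poly_symbol U \<Longrightarrow> poly_symbol (\<lambda>x xi. T x xi + U x xi)"

lemma homog_cong: "homog m T \<Longrightarrow> (\<And>x xi. T x xi = U x xi) \<Longrightarrow> homog m U"
proof -
  assume "homog m T" and "\<And>x xi. T x xi = U x xi"
  moreover from this(2) have "T = U"
    by (intro ext)
  ultimately show ?thesis
    by simp
qed

lemma homog_diff: "homog m T \<Longrightarrow> homog m U \<Longrightarrow> homog m (\<lambda>x xi. T x xi - U x xi)"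
  by (rule homog_cong[OF homog_add[OF _ homog_cmult[where a="-1"]]]) auto

lemma homog_sum: "finite I \<Longrightarrow> (\<And>i. i \<in> I \<Longrightarrow> homog m (T i)) \<Longrightarrow> homog m (\<lambda>x xi. \<Sum>i\<in>I. T i x xi)"
  by (induction rule: finite_induct) (auto intro: homog_zero homog_add)

lemma homog_0_indep_xi: "homog 0 T \<Longrightarrow> T x xi = T x 0"
proof (induction "0::nat" T arbitrary: x xi rule: homog.induct)
  case (homog_add T U)
  then show ?case
    by (metis (no_types))
qed simp_all

lemma deriv_xi_homog_0: "homog 0 T \<Longrightarrow> deriv_xi v T = (\<lambda>x xi. 0)"
proof -
  assume "homog 0 T"
  then have "T = (\<lambda>x xi. T x 0)"
    by (blast intro: ext homog_0_indep_xi)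
  then have "has_deriv_xi v T (\<lambda>x xi. 0)"
    by (metis has_deriv_xi_base)
  then show ?thesis
    by (rule deriv_xi_eqI)
qed

lemma homog_deriv_x:
  "homog m T \<Longrightarrow> w \<in> Basis \<Longrightarrow> has_deriv_x w T (deriv_x w T) \<and> homog m (deriv_x w T)"
proof (induction rule: homog.induct)
  case (homog_zero m)
  have D: "has_deriv_x w (\<lambda>x xi. 0) (\<lambda>x xi. 0)"
    by (rule has_deriv_x_fibre)
  then show ?case
    unfolding deriv_x_eqI[OF D] by (simp add: homog.homog_zero)
next
  case (homog_coeff c)
  have D: "has_deriv_x w (\<lambda>x xi. c x) (\<lambda>x xi. dir_deriv w c x)"
    using partially_smooth_has_dir_deriv[OF homog_coeff] by (simp add: has_deriv_x_def)
  then show ?case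
    unfolding deriv_x_eqI[OF D] using partially_smooth_dir_deriv[OF homog_coeff] by (simp add: homog.homog_coeff)
next
  case (homog_xi m T e)
  have D: "has_deriv_x w (\<lambda>x xi. (xi \<bullet> e) * T x xi) (\<lambda>x xi. (xi \<bullet> e) * deriv_x w T x xi)"
    by (rule has_deriv_x_cong[OF has_deriv_x_mult[OF has_deriv_x_fibre]]) (use homog_xi in auto)
  then show ?case
    unfolding deriv_x_eqI[OF D] using homog_xi by (simp add: homog.homog_xi)
next
  case (homog_x m T e)
  have D: "has_deriv_x w (\<lambda>x xi. (x \<bullet> e) * T x xi) (\<lambda>x xi. (w \<bullet> e) * T x xi + (x \<bullet> e) * deriv_x w T x xi)"
    by (rule has_deriv_x_mult[OF has_deriv_x_inner]) (use homog_x in auto)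
  then show ?case
    unfolding deriv_x_eqI[OF D] using homog_x by (simp add: homog.homog_add homog.homog_cmult homog.homog_x)
next
  case (homog_add m T U)
  have D: "has_deriv_x w (\<lambda>x xi. T x xi + U x xi) (\<lambda>x xi. deriv_x w T x xi + deriv_x w U x xi)"
    using homog_add by (blast intro: has_deriv_x_add)
  then show ?case
    unfolding deriv_x_eqI[OF D] using homog_add by (simp add: homog.homog_add)
next
  case (homog_cmult m T a)
  have D: "has_deriv_x w (\<lambda>x xi. a * T x xi) (\<lambda>x xi. a * deriv_x w T x xi)"
    using homog_cmult by (blast intro: has_deriv_x_cmult)
  then show ?case
    unfolding deriv_x_eqI[OF D] using homog_cmult by (simp add: homog.homog_cmult)
qed

lemma homog_deriv_xi:
  "homog m T \<Longrightarrow> has_deriv_xi v T (deriv_xi v T) \<and> homog (m - 1) (deriv_xi v T)"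
proof (induction rule: homog.induct)
  case (homog_zero m)
  have D: "has_deriv_xi v (\<lambda>x xi. 0) (\<lambda>x xi. 0)"
    by (rule has_deriv_xi_base)
  then show ?case
    unfolding deriv_xi_eqI[OF D] by (simp add: homog.homog_zero)
next
  case (homog_coeff c)
  have D: "has_deriv_xi v (\<lambda>x xi. c x) (\<lambda>x xi. 0)"
    by (rule has_deriv_xi_base)
  then show ?case
    unfolding deriv_xi_eqI[OF D] by (simp add: homog.homog_zero)
next
  case (homog_xi m T e)
  have D: "has_deriv_xi v (\<lambda>x xi. (xi \<bullet> e) * T x xi) (\<lambda>x xi. (v \<bullet> e) * T x xi + (xi \<bullet> e) * deriv_xi v T x xi)"
    by (rule has_deriv_xi_mult[OF has_deriv_xi_inner]) (use homog_xi in auto)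
  moreover have "homog m (\<lambda>x xi. (xi \<bullet> e) * deriv_xi v T x xi)"
  proof (cases m)
    case 0
    then show ?thesis
      using homog_xi.hyps by (simp add: deriv_xi_homog_0 homog.homog_zero)
  next
    case (Suc k)
    then show ?thesis
      using homog_xi.IH homog.homog_xi[of k "deriv_xi v T" e] by simp
  qed
  ultimately show ?case
    unfolding deriv_xi_eqI[OF D] using homog_xi by (simp add: homog.homog_add homog.homog_cmult)
next
  case (homog_x m T e)
  have D: "has_deriv_xi v (\<lambda>x xi. (x \<bullet> e) * T x xi) (\<lambda>x xi. (x \<bullet> e) * deriv_xi v T x xi)"
    by (rule has_deriv_xi_cong[OF has_deriv_xi_mult[OF has_deriv_xi_base]]) (use homog_x in auto)
  then show ?case
    unfolding deriv_xi_eqI[OF D] using homog_x by (simp add: homog.homog_x)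
next
  case (homog_add m T U)
  have D: "has_deriv_xi v (\<lambda>x xi. T x xi + U x xi) (\<lambda>x xi. deriv_xi v T x xi + deriv_xi v U x xi)"
    using homog_add by (blast intro: has_deriv_xi_add)
  then show ?case
    unfolding deriv_xi_eqI[OF D] using homog_add by (simp add: homog.homog_add)
next
  case (homog_cmult m T a)
  have D: "has_deriv_xi v (\<lambda>x xi. a * T x xi) (\<lambda>x xi. a * deriv_xi v T x xi)"
    using homog_cmult by (blast intro: has_deriv_xi_cmult)
  then show ?case
    unfolding deriv_xi_eqI[OF D] using homog_cmult by (simp add: homog.homog_cmult)
qed

lemma poly_symbol_cong: "poly_symbol T \<Longrightarrow> (\<And>x xi. T x xi = U x xi) \<Longrightarrow> poly_symbol U"
proof -
  assume "poly_symbol T" and "\<And>x xi. T x xi = U x xi"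
  moreover from this(2) have "T = U"
    by (intro ext)
  ultimately show ?thesis
    by simp
qed

lemma poly_symbol_zero [simp]: "poly_symbol (\<lambda>x xi. 0)"
  by (rule poly_symbol_homog[OF homog_zero])

lemma poly_symbol_xi [simp]: "poly_symbol T \<Longrightarrow> poly_symbol (\<lambda>x xi. (xi \<bullet> e) * T x xi)"
proof (induction rule: poly_symbol.induct)
  case (poly_symbol_add T U)
  show ?case
    by (rule poly_symbol_cong[OF poly_symbol.poly_symbol_add[OF poly_symbol_add.IH]]) (simp add: algebra_simps)
qed (blast intro: homog_xi poly_symbol.poly_symbol_homog)

lemma poly_symbol_x [simp]: "poly_symbol T \<Longrightarrow> poly_symbol (\<lambda>x xi. (x \<bullet> e) * T x xi)"
proof (induction rule: poly_symbol.induct)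
  case (poly_symbol_add T U)
  show ?case
    by (rule poly_symbol_cong[OF poly_symbol.poly_symbol_add[OF poly_symbol_add.IH]]) (simp add: algebra_simps)
qed (blast intro: homog_x poly_symbol.poly_symbol_homog)

lemma poly_symbol_cmult [simp]: "poly_symbol T \<Longrightarrow> poly_symbol (\<lambda>x xi. a * T x xi)"
proof (induction rule: poly_symbol.induct)
  case (poly_symbol_add T U)
  show ?case
    by (rule poly_symbol_cong[OF poly_symbol.poly_symbol_add[OF poly_symbol_add.IH]]) (simp add: algebra_simps)
qed (blast intro: homog_cmult poly_symbol.poly_symbol_homog)

lemma poly_symbol_deriv_x:
  "poly_symbol T \<Longrightarrow> w \<in> Basis \<Longrightarrow> has_deriv_x w T (deriv_x w T) \<and> poly_symbol (deriv_x w T)"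
proof (induction rule: poly_symbol.induct)
  case (poly_symbol_homog m T)
  then show ?case
    using homog_deriv_x by (blast intro: poly_symbol.poly_symbol_homog)
next
  case (poly_symbol_add T U)
  then have D: "has_deriv_x w (\<lambda>x xi. T x xi + U x xi) (\<lambda>x xi. deriv_x w T x xi + deriv_x w U x xi)"
    by (blast intro: has_deriv_x_add)
  then show ?case
    unfolding deriv_x_eqI[OF D] using poly_symbol_add by simp
qed

lemma poly_symbol_deriv_xi:
  "poly_symbol T \<Longrightarrow> has_deriv_xi v T (deriv_xi v T) \<and> poly_symbol (deriv_xi v T)"
proof (induction rule: poly_symbol.induct)
  case (poly_symbol_homog m T)
  then show ?case
    using homog_deriv_xi by (blast intro: poly_symbol.poly_symbol_homog)
next
  case (poly_symbol_add T U)
  then have D: "has_deriv_xi v (\<lambda>x xi. T x xi + U x xi) (\<lambda>x xi. deriv_xi v T x xi + deriv_xi v U x xi)"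
    by (blast intro: has_deriv_xi_add)
  then show ?case
    unfolding deriv_xi_eqI[OF D] using poly_symbol_add by simp
qed

lemma poly_symbol_has_deriv_x: "poly_symbol T \<Longrightarrow> w \<in> Basis \<Longrightarrow> has_deriv_x w T (deriv_x w T)"
  using poly_symbol_deriv_x by blast

lemma poly_symbol_has_deriv_xi: "poly_symbol T \<Longrightarrow> has_deriv_xi v T (deriv_xi v T)"
  using poly_symbol_deriv_xi by blast

lemma poly_symbol_deriv_x_closed [simp]: "poly_symbol T \<Longrightarrow> w \<in> Basis \<Longrightarrow> poly_symbol (deriv_x w T)"
  using poly_symbol_deriv_x by blast

lemma poly_symbol_deriv_xi_closed [simp]: "poly_symbol T \<Longrightarrow> poly_symbol (deriv_xi v T)"
  using poly_symbol_deriv_xi by blast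

lemma deriv_x_fibre [simp]: "deriv_x w (\<lambda>x xi. f xi) = (\<lambda>x xi. 0)"
  by (rule deriv_x_eqI[OF has_deriv_x_fibre])

lemma deriv_xi_base [simp]: "deriv_xi v (\<lambda>x xi. f x) = (\<lambda>x xi. 0)"
  by (rule deriv_xi_eqI[OF has_deriv_xi_base])

lemma deriv_x_coeff:
  "partially_smooth c \<Longrightarrow> w \<in> Basis \<Longrightarrow> deriv_x w (\<lambda>x xi. c x) = (\<lambda>x xi. dir_deriv w c x)"
  by (rule deriv_x_eqI) (simp add: has_deriv_x_def partially_smooth_has_dir_deriv)

lemma deriv_x_xi [simp]:
  "poly_symbol T \<Longrightarrow> w \<in> Basis \<Longrightarrow>
    deriv_x w (\<lambda>x xi. (xi \<bullet> e) * T x xi) = (\<lambda>x xi. (xi \<bullet> e) * deriv_x w T x xi)"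
  by (rule deriv_x_eqI, rule has_deriv_x_cong[OF has_deriv_x_mult[OF has_deriv_x_fibre poly_symbol_has_deriv_x]])
    auto

lemma deriv_xi_xi [simp]:
  "poly_symbol T \<Longrightarrow>
    deriv_xi v (\<lambda>x xi. (xi \<bullet> e) * T x xi) = (\<lambda>x xi. (v \<bullet> e) * T x xi + (xi \<bullet> e) * deriv_xi v T x xi)"
  by (rule deriv_xi_eqI, rule has_deriv_xi_mult[OF has_deriv_xi_inner poly_symbol_has_deriv_xi])

lemma deriv_x_x [simp]:
  "poly_symbol T \<Longrightarrow> w \<in> Basis \<Longrightarrow>
    deriv_x w (\<lambda>x xi. (x \<bullet> e) * T x xi) = (\<lambda>x xi. (w \<bullet> e) * T x xi + (x \<bullet> e) * deriv_x w T x xi)"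
  by (rule deriv_x_eqI, rule has_deriv_x_mult[OF has_deriv_x_inner poly_symbol_has_deriv_x])

lemma deriv_xi_x [simp]:
  "poly_symbol T \<Longrightarrow> deriv_xi v (\<lambda>x xi. (x \<bullet> e) * T x xi) = (\<lambda>x xi. (x \<bullet> e) * deriv_xi v T x xi)"
  by (rule deriv_xi_eqI, rule has_deriv_xi_cong[OF has_deriv_xi_mult[OF has_deriv_xi_base poly_symbol_has_deriv_xi]])
    auto

lemma deriv_x_add [simp]:
  "poly_symbol T \<Longrightarrow> poly_symbol U \<Longrightarrow> w \<in> Basis \<Longrightarrow>
    deriv_x w (\<lambda>x xi. T x xi + U x xi) = (\<lambda>x xi. deriv_x w T x xi + deriv_x w U x xi)"
  by (rule deriv_x_eqI, rule has_deriv_x_add[OF poly_symbol_has_deriv_x poly_symbol_has_deriv_x])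

lemma deriv_xi_add [simp]:
  "poly_symbol T \<Longrightarrow> poly_symbol U \<Longrightarrow>
    deriv_xi v (\<lambda>x xi. T x xi + U x xi) = (\<lambda>x xi. deriv_xi v T x xi + deriv_xi v U x xi)"
  by (rule deriv_xi_eqI, rule has_deriv_xi_add[OF poly_symbol_has_deriv_xi poly_symbol_has_deriv_xi])

lemma deriv_x_cmult [simp]:
  "poly_symbol T \<Longrightarrow> w \<in> Basis \<Longrightarrow> deriv_x w (\<lambda>x xi. a * T x xi) = (\<lambda>x xi. a * deriv_x w T x xi)"
  by (rule deriv_x_eqI, rule has_deriv_x_cmult[OF poly_symbol_has_deriv_x])

lemma deriv_xi_cmult [simp]:
  "poly_symbol T \<Longrightarrow> deriv_xi v (\<lambda>x xi. a * T x xi) = (\<lambda>x xi. a * deriv_xi v T x xi)"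
  by (rule deriv_xi_eqI, rule has_deriv_xi_cmult[OF poly_symbol_has_deriv_xi])

lemma deriv_xi_sum [simp]:
  "(\<And>i. i \<in> I \<Longrightarrow> poly_symbol (T i)) \<Longrightarrow>
    deriv_xi v (\<lambda>x xi. \<Sum>i\<in>I. T i x xi) = (\<lambda>x xi. \<Sum>i\<in>I. deriv_xi v (T i) x xi)"
  by (rule deriv_xi_eqI, rule has_deriv_xi_sum, rule poly_symbol_has_deriv_xi) auto

lemma deriv_xi_deriv_x_commute:
  "poly_symbol T \<Longrightarrow> w \<in> Basis \<Longrightarrow> deriv_xi v (deriv_x w T) = deriv_x w (deriv_xi v T)"
proof (induction rule: poly_symbol.induct)
  case (poly_symbol_homog m T)
  then show ?case
  proof (induction rule: homog.induct)
    case (homog_coeff c)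
    then show ?case
      by (simp add: deriv_x_coeff)
  qed (use homog_deriv_x in \<open>auto intro: poly_symbol.poly_symbol_homog\<close>)
qed simp

lemma homog_euler:
  "homog m T \<Longrightarrow> (\<Sum>b\<in>Basis. (xi \<bullet> b) * deriv_xi b T x xi) = real m * T x xi"
proof (induction arbitrary: x xi rule: homog.induct)
  case (homog_xi m T e)
  have "(\<Sum>b\<in>Basis. (xi \<bullet> b) * deriv_xi b (\<lambda>x xi. (xi \<bullet> e) * T x xi) x xi)
      = (\<Sum>b\<in>Basis. (xi \<bullet> b) * (b \<bullet> e)) * T x xi + (xi \<bullet> e) * (\<Sum>b\<in>Basis. (xi \<bullet> b) * deriv_xi b T x xi)"
    using homog_xi.hyps by (simp add: algebra_simps sum.distrib sum_distrib_left sum_distrib_right)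
  also have "(\<Sum>b\<in>Basis. (xi \<bullet> b) * (b \<bullet> e)) = xi \<bullet> e"
    by (simp add: euclidean_inner[of xi e] inner_commute[of e])
  also have "(xi \<bullet> e) * T x xi + (xi \<bullet> e) * (\<Sum>b\<in>Basis. (xi \<bullet> b) * deriv_xi b T x xi)
      = real (Suc m) * ((xi \<bullet> e) * T x xi)"
    unfolding homog_xi.IH by (simp add: algebra_simps)
  finally show ?case .
next
  case (homog_x m T e)
  then show ?case
    by (simp add: mult.left_commute flip: sum_distrib_left)
next
  case (homog_add m T U)
  then show ?case
    by (simp add: algebra_simps sum.distrib)
next
  case (homog_cmult m T a)
  then show ?case
    by (simp add: mult.left_commute flip: sum_distrib_left)
qed simp_all

section \<open>Symbols in \<open>R\<^sup>m\<close> are homogeneous\<close>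

primrec iter_deriv_xi :: "'b::real_normed_vector list \<Rightarrow> ('a \<Rightarrow> 'b \<Rightarrow> real) \<Rightarrow> 'a \<Rightarrow> 'b \<Rightarrow> real" where
  "iter_deriv_xi [] T = T"
| "iter_deriv_xi (v # vs) T = deriv_xi v (iter_deriv_xi vs T)"

lemma iter_deriv_xi_snoc: "iter_deriv_xi (vs @ [v]) T = iter_deriv_xi vs (deriv_xi v T)"
  by (induction vs) simp_all

lemma iter_deriv_xi_eq_iter_pd:
  fixes T :: "'a::real_normed_vector \<Rightarrow> 'b::real_normed_vector \<Rightarrow> real"
  shows "iter_deriv_xi vs T x xi = iter_pd (map (\<lambda>v. (0::'a, v)) vs) (\<lambda>(x, xi). T x xi) (x, xi)"
proof (induction vs arbitrary: x xi)
  case (Cons v vs)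
  have "(x, xi) + h *\<^sub>R (0, v) = (x, xi + h *\<^sub>R v)" for h
    by simp
  then show ?case
    by (simp add: deriv_xi_def dir_deriv_def Cons.IH)
qed simp

text \<open>Induction on \<open>m\<close>: by Euler's identity \<open>T = (1/m) \<Sum>\<^sub>b xi\<^sub>b \<partial>\<^sub>b T\<close>, and the derivatives of order
  \<open>m\<close> at \<open>xi = 0\<close> are the (smooth) coefficients.\<close>

lemma homog_from_frozen:
  fixes T :: "'a::euclidean_space \<Rightarrow> 'b::euclidean_space \<Rightarrow> real"
  assumes "\<And>x0. homog m (\<lambda>(x::'a) xi. T x0 xi)"
    and "\<And>vs. set vs \<subseteq> Basis \<Longrightarrow> partially_smooth (\<lambda>x. iter_deriv_xi vs T x 0)"
  shows "homog m T"
  using assms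
proof (induction m arbitrary: T)
  case 0
  have "homog 0 (\<lambda>x xi. T x 0)"
    using "0.prems"(2)[of "[]"] by (simp add: homog_coeff)
  then show ?case
    by (rule homog_cong) (rule homog_0_indep_xi[OF "0.prems"(1), symmetric])
next
  case (Suc m)
  have frozen: "deriv_xi v (\<lambda>x xi. T x0 xi) = (\<lambda>x xi. deriv_xi v T x0 xi)" for v x0
    by (simp add: deriv_xi_def)
  have homog_deriv: "homog m (deriv_xi v T)" if "v \<in> Basis" for v
  proof (rule Suc.IH)
    show "homog m (\<lambda>(x::'a) xi. deriv_xi v T x0 xi)" for x0
      using homog_deriv_xi[OF Suc.prems(1)[of x0], of v] unfolding frozen by simp
    show "partially_smooth (\<lambda>x. iter_deriv_xi vs (deriv_xi v T) x 0)" if "set vs \<subseteq> Basis" for vs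
      using Suc.prems(2)[of "vs @ [v]"] that \<open>v \<in> Basis\<close> by (simp add: iter_deriv_xi_snoc)
  qed
  have "homog (Suc m) (\<lambda>x xi. 1 / real (Suc m) * (\<Sum>b\<in>Basis. (xi \<bullet> b) * deriv_xi b T x xi))"
    by (intro homog_cmult homog_sum homog_xi homog_deriv) simp_all
  moreover have "1 / real (Suc m) * (\<Sum>b\<in>Basis. (xi \<bullet> b) * deriv_xi b T x xi) = T x xi" for x xi
    using homog_euler[OF Suc.prems(1)[of x], of xi x] unfolding frozen by simp
  ultimately show ?case
    by (rule homog_cong)
qed

lemma homog_xi_power: "homog m T \<Longrightarrow> homog (m + j) (\<lambda>x xi. (xi \<bullet> b) ^ j * T x xi)"
proof (induction j)
  case (Suc j)
  then have "homog (m + Suc j) (\<lambda>x xi. (xi \<bullet> b) * ((xi \<bullet> b) ^ j * T x xi))"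
    using homog_xi by simp
  then show ?case
    by (rule homog_cong) simp
qed simp

lemma homog_prod_xi_powers:
  "finite B \<Longrightarrow> homog (\<Sum>b\<in>B. \<alpha> b) (\<lambda>(x::'a::euclidean_space) (xi::'b::euclidean_space). \<Prod>b\<in>B. (xi \<bullet> b) ^ \<alpha> b)"
proof (induction rule: finite_induct)
  case empty
  show ?case
    using homog_coeff[OF partially_smooth_const[where a=1]] by simp
next
  case (insert b B)
  then show ?case
    using homog_xi_power[OF insert.IH, of "\<alpha> b" b] by (simp add: add.commute)
qed

lemma homog_frozen_if_hom_poly:
  fixes S :: "'n::finite sym"
  assumes "hom_poly m S"
  shows "homog m (\<lambda>(x::'n pt) xi. S x0 xi)"
proof -
  obtain c where c: "\<And>x xi. S x xi = (\<Sum>\<alpha>\<in>multiidx m. c \<alpha> x * monom \<alpha> xi)"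
    using assms unfolding hom_poly_def by blast
  have monom_homog: "homog m (\<lambda>(x::'n pt) xi. monom \<alpha> xi)" if "\<alpha> \<in> multiidx m" for \<alpha>
    using that homog_prod_xi_powers[of Basis \<alpha>] unfolding multiidx_def monom_def by auto
  have "homog m (\<lambda>(x::'n pt) xi. \<Sum>\<alpha>\<in>multiidx m. c \<alpha> x0 * monom \<alpha> xi)"
  proof (cases "finite (multiidx m :: ('n pt \<Rightarrow> nat) set)")
    case True
    then show ?thesis
      by (intro homog_sum homog_cmult monom_homog)
  qed (simp add: homog_zero)
  then show ?thesis
    by (rule homog_cong) (simp add: c)
qed

lemma homog_if_Rsp:
  fixes S :: "'n::finite sym"
  assumes "S \<in> Rsp m"
  shows "homog m S"
proof (rule homog_from_frozen)
  show "homog m (\<lambda>(x::'n pt) xi. S x0 xi)" for x0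
    using assms unfolding Rsp_def by (blast intro: homog_frozen_if_hom_poly)
  show "partially_smooth (\<lambda>x. iter_deriv_xi vs S x 0)" if "set vs \<subseteq> Basis" for vs
  proof -
    have "set (map (\<lambda>v. (0::'n pt, v)) vs) \<subseteq> Basis"
      using that by (auto simp: Basis_prod_def)
    then show ?thesis
      using assms unfolding Rsp_def iter_deriv_xi_eq_iter_pd by (blast intro: partially_smooth_iter_pd)
  qed
qed

section \<open>The operators in coordinates\<close>

text \<open>Coefficients of the first order operators \<open>i(\<alpha>)\<close> and \<open>D\<close>, paired with a gradient that is given
  by its values on the coordinate vectors (see \<open>ia_eq_ia_form\<close> and \<open>Dop_eq_D_form\<close>).\<close>

definition ia_form0 :: "'n::finite pt \<Rightarrow> ('n pt \<Rightarrow> real) \<Rightarrow> real" where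
  "ia_form0 x f = (\<Sum>i\<in>UNIV. (x \<bullet> ep i) * f (eq i) - (x \<bullet> eq i) * f (ep i))"

definition ia_form :: "'n::finite pt \<Rightarrow> ('n pt \<Rightarrow> real) \<Rightarrow> real" where
  "ia_form x f = ia_form0 x f - f et"

definition D_form :: "'n::finite pt \<Rightarrow> 'n pt \<Rightarrow> ('n pt \<Rightarrow> real) \<Rightarrow> real" where
  "D_form x xi g = (\<Sum>i\<in>UNIV. (xi \<bullet> eq i) * g (ep i) - (xi \<bullet> ep i) * g (eq i))
     + (xi \<bullet> et) * (\<Sum>i\<in>UNIV. (x \<bullet> ep i) * g (ep i) + (x \<bullet> eq i) * g (eq i))
     - (\<Sum>i\<in>UNIV. (x \<bullet> ep i) * (xi \<bullet> ep i) + (x \<bullet> eq i) * (xi \<bullet> eq i)) * g et"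

lemma D_form_cong: "(\<And>w. w \<in> Basis \<Longrightarrow> g w = g' w) \<Longrightarrow> D_form x xi g = D_form x xi g'"
  unfolding D_form_def by (simp add: eq_in_Basis ep_in_Basis et_in_Basis)

lemma ia_form_add: "ia_form x (\<lambda>v. f v + f' v) = ia_form x f + ia_form x f'"
  unfolding ia_form_def ia_form0_def by (simp add: sum.distrib algebra_simps sum_subtractf)

lemma ia_form_cmult: "ia_form x (\<lambda>v. a * f v) = a * ia_form x f"
  unfolding ia_form_def ia_form0_def by (simp add: algebra_simps sum_subtractf sum_distrib_left)

lemma ia_form_sum: "ia_form x (\<lambda>v. \<Sum>i\<in>I. f i v) = (\<Sum>i\<in>I. ia_form x (f i))"
  unfolding ia_form_def ia_form0_def
  by (simp add: sum.distrib algebra_simps sum_subtractf sum_distrib_left sum.swap[of _ I])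

lemma D_form_add: "D_form x xi (\<lambda>w. g w + g' w) = D_form x xi g + D_form x xi g'"
  unfolding D_form_def by (simp add: sum.distrib algebra_simps sum_subtractf)

lemma D_form_diff: "D_form x xi (\<lambda>w. g w - g' w) = D_form x xi g - D_form x xi g'"
  unfolding D_form_def by (simp add: sum.distrib algebra_simps sum_subtractf)

lemma D_form_cmult: "D_form x xi (\<lambda>w. a * g w) = a * D_form x xi g"
  unfolding D_form_def by (simp add: sum.distrib algebra_simps sum_subtractf sum_distrib_left)

lemma D_form_sum: "D_form x xi (\<lambda>w. \<Sum>i\<in>I. g i w) = (\<Sum>i\<in>I. D_form x xi (g i))"
  unfolding D_form_def
  by (simp add: sum.distrib algebra_simps sum_subtractf sum_distrib_left sum_distrib_right sum.swap[of _ I])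

lemma ia_form_D_form_swap:
  "ia_form x (\<lambda>v. D_form x xi (\<lambda>w. C v w)) = D_form x xi (\<lambda>w. ia_form x (\<lambda>v. C v w))"
  unfolding ia_form_def ia_form0_def by (simp add: D_form_diff D_form_sum D_form_cmult)

lemma if_zero_mult_distrib:
  "(a::real) * (if P then b else 0) = (if P then a * b else 0)"
  "(if P then b else 0) * (a::real) = (if P then b * a else 0)"
  "- (if P then (b::real) else 0) = (if P then - b else 0)"
  by auto

text \<open>The identity behind the commutator formula: the coefficients of \<open>D\<close> are linear in \<open>xi\<close>, and
  contracting that dependence with \<open>\<alpha>\<close> gives zero.\<close>

lemma ia_form_D_form_vanish: "ia_form x (\<lambda>v. D_form x v g) = 0"
  unfolding ia_form_def ia_form0_def D_form_def
  by (simp add: algebra_simps sum.distrib sum_subtractf if_zero_mult_distrib)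

lemma D_form_ia_form0:
  "D_form x xi (\<lambda>w. ia_form0 w f) = (\<Sum>v\<in>Basis. (xi \<bullet> v) * f v) + (xi \<bullet> et) * ia_form x f"
  unfolding ia_form_def ia_form0_def D_form_def sum_Basis_pt
  by (simp add: algebra_simps sum.distrib sum_subtractf if_zero_mult_distrib sum_distrib_left)

lemma ia_form_et: "ia_form x (\<lambda>v. (v \<bullet> et) * t) = - t"
  unfolding ia_form_def ia_form0_def by simp

lemma ia_eq_ia_form: "ia T = (\<lambda>x xi. 1/2 * ia_form x (\<lambda>v. deriv_xi v T x xi))"
  unfolding ia_def ia_form_def ia_form0_def dXi_eq_deriv_xi pc_eq_inner qc_eq_inner by simp

lemma Dop_eq_D_form: "Dop T = (\<lambda>x xi. D_form x xi (\<lambda>w. deriv_x w T x xi))"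
  unfolding Dop_def D_form_def Es_def Es_xi_def dX_eq_deriv_x pc_eq_inner qc_eq_inner tc_eq_inner
  by simp

lemma Xop_eq:
  fixes T :: "'n::finite sym"
  shows "Xop \<delta> k T = (\<lambda>x xi. Dop T x xi + (2 * (real CARD('n) + 1) * \<delta> + real k) * ((xi \<bullet> et) * T x xi))"
  unfolding Xop_def tc_eq_inner by (simp add: algebra_simps)

lemma homog_ia: "homog m T \<Longrightarrow> homog (m - 1) (ia T)"
  for T :: "'n::finite sym"
proof -
  assume T: "homog m T"
  then have d: "homog (m - 1) (deriv_xi v T)" for v
    using homog_deriv_xi by blast
  have "homog (m - 1) (\<lambda>x xi. 1/2 * ((\<Sum>i\<in>UNIV. (x \<bullet> ep i) * deriv_xi (eq i) T x xi
      - (x \<bullet> eq i) * deriv_xi (ep i) T x xi) - deriv_xi et T x xi))"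
    by (intro homog_cmult homog_diff homog_sum homog_x d) simp_all
  then show ?thesis
    unfolding ia_eq_ia_form ia_form_def ia_form0_def .
qed

lemma homog_Dop: "homog m T \<Longrightarrow> homog (Suc m) (Dop T)"
  for T :: "'n::finite sym"
proof -
  assume T: "homog m T"
  then have d: "homog m (deriv_x w T)" if "w \<in> Basis" for w
    using homog_deriv_x that by blast
  have "homog (Suc m) (\<lambda>x xi. (\<Sum>i\<in>UNIV. (xi \<bullet> eq i) * deriv_x (ep i) T x xi - (xi \<bullet> ep i) * deriv_x (eq i) T x xi)
      + (xi \<bullet> et) * (\<Sum>i\<in>UNIV. (x \<bullet> ep i) * deriv_x (ep i) T x xi + (x \<bullet> eq i) * deriv_x (eq i) T x xi)
      - (\<Sum>i\<in>UNIV. (x \<bullet> ep i) * ((xi \<bullet> ep i) * deriv_x et T x xi) + (x \<bullet> eq i) * ((xi \<bullet> eq i) * deriv_x et T x xi)))"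
    by (intro homog_add homog_diff homog_sum homog_xi homog_x d eq_in_Basis ep_in_Basis et_in_Basis) simp_all
  then show ?thesis
    unfolding Dop_eq_D_form D_form_def by (rule homog_cong) (simp add: sum_distrib_left algebra_simps)
qed

lemma homog_Xop: "homog m T \<Longrightarrow> homog (Suc m) (Xop \<delta> k T)"
  for T :: "'n::finite sym"
  unfolding Xop_eq by (intro homog_add homog_Dop homog_cmult homog_xi)

lemma homog_Xpow: "homog m T \<Longrightarrow> homog (m + l) (Xpow \<delta> m l T)"
  for T :: "'n::finite sym"
  by (induction l) (simp_all add: homog_Xop)

lemma homog_ia_power: "homog m T \<Longrightarrow> homog (m - l) ((ia ^^ l) T)"
  for T :: "'n::finite sym"
  proof (induction l)
  case (Suc l)
  then show ?case
    using homog_ia[OF Suc.IH] by simp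
qed simp

lemma ia_homog_0: "homog 0 T \<Longrightarrow> ia T = (\<lambda>x xi. 0)"
  for T :: "'n::finite sym"
  unfolding ia_eq_ia_form ia_form_def ia_form0_def by (simp add: deriv_xi_homog_0)

lemma Xop_zero: "Xop \<delta> k (\<lambda>x xi. 0) = (\<lambda>x (xi::'n::finite pt). 0)"
  unfolding Xop_eq Dop_eq_D_form D_form_def by simp

lemma Xpow_zero: "Xpow \<delta> m l (\<lambda>x xi. 0) = (\<lambda>x (xi::'n::finite pt). 0)"
  by (induction l) (simp_all add: Xop_zero)

lemma has_deriv_xi_D_form:
  fixes G G' :: "'n::finite pt \<Rightarrow> 'n pt \<Rightarrow> 'n pt \<Rightarrow> real"
  assumes "\<And>w. w \<in> Basis \<Longrightarrow> has_deriv_xi v (G w) (G' w)"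
  shows "has_deriv_xi v (\<lambda>x xi. D_form x xi (\<lambda>w. G w x xi))
           (\<lambda>x xi. D_form x xi (\<lambda>w. G' w x xi) + D_form x v (\<lambda>w. G w x xi))"
  unfolding D_form_def
  apply (rule has_deriv_xi_cong)
   apply (rule has_deriv_xi_add has_deriv_xi_diff has_deriv_xi_mult has_deriv_xi_sum has_deriv_xi_inner
      has_deriv_xi_base assms eq_in_Basis ep_in_Basis et_in_Basis)+
  apply (simp add: algebra_simps sum.distrib sum_subtractf sum_distrib_left sum_distrib_right)
  done

lemma has_deriv_x_ia_form:
  fixes G G' :: "'n::finite pt \<Rightarrow> 'n pt \<Rightarrow> 'n pt \<Rightarrow> real"
  assumes "\<And>v. v \<in> Basis \<Longrightarrow> has_deriv_x w (G v) (G' v)"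
  shows "has_deriv_x w (\<lambda>x xi. ia_form x (\<lambda>v. G v x xi))
           (\<lambda>x xi. ia_form x (\<lambda>v. G' v x xi) + ia_form0 w (\<lambda>v. G v x xi))"
  unfolding ia_form_def ia_form0_def
  apply (rule has_deriv_x_cong)
   apply (rule has_deriv_x_add has_deriv_x_diff has_deriv_x_mult has_deriv_x_sum has_deriv_x_inner
      has_deriv_x_fibre assms eq_in_Basis ep_in_Basis et_in_Basis)+
  apply (simp add: algebra_simps sum.distrib sum_subtractf sum_distrib_left sum_distrib_right)
  done

lemma deriv_xi_Dop:
  fixes T :: "'n::finite sym"
  assumes "poly_symbol T"
  shows "deriv_xi v (Dop T) =
    (\<lambda>x xi. D_form x xi (\<lambda>w. deriv_x w (deriv_xi v T) x xi) + D_form x v (\<lambda>w. deriv_x w T x xi))"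
proof -
  have "has_deriv_xi v (Dop T)
      (\<lambda>x xi. D_form x xi (\<lambda>w. deriv_xi v (deriv_x w T) x xi) + D_form x v (\<lambda>w. deriv_x w T x xi))"
    unfolding Dop_eq_D_form using assms by (intro has_deriv_xi_D_form poly_symbol_has_deriv_xi) simp
  then show ?thesis
    using assms by (simp add: deriv_xi_eqI deriv_xi_deriv_x_commute cong: D_form_cong)
qed

lemma deriv_x_ia:
  fixes T :: "'n::finite sym"
  assumes "poly_symbol T" and "w \<in> Basis"
  shows "deriv_x w (ia T) =
    (\<lambda>x xi. 1/2 * (ia_form x (\<lambda>v. deriv_x w (deriv_xi v T) x xi) + ia_form0 w (\<lambda>v. deriv_xi v T x xi)))"
  unfolding ia_eq_ia_form using assms
  by (intro deriv_x_eqI has_deriv_x_cmult has_deriv_x_ia_form poly_symbol_has_deriv_x) simp_all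

section \<open>The commutator of \<open>i(\<alpha>)\<close> and \<open>X\<close>\<close>

lemma ia_Xop_commutator:
  fixes T :: "'n::finite sym"
  assumes T: "homog m T"
  shows "ia (Xop \<delta> m T) x xi = Xop \<delta> (m - 1) (ia T) x xi - ((real CARD('n) + 1) * \<delta> + real m) * T x xi"
proof -
  have poly_T: "poly_symbol T" and poly_DT: "poly_symbol (Dop T)"
    using T homog_Dop[OF T] by simp_all
  define C where "C = 2 * (real CARD('n) + 1) * \<delta> + real m"
  define t where "t = T x xi"
  define a where "a = (\<lambda>w. deriv_x w T x xi)"
  define b where "b = (\<lambda>v. deriv_xi v T x xi)"
  define c where "c = (\<lambda>v w. deriv_x w (deriv_xi v T) x xi)"
  have "deriv_xi v (Xop \<delta> m T) x xi = D_form x xi (c v) + D_form x v a + C * ((v \<bullet> et) * t + (xi \<bullet> et) * b v)" for v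
    unfolding Xop_eq using poly_T poly_DT by (simp add: deriv_xi_Dop C_def t_def a_def b_def c_def)
  then have lhs: "ia (Xop \<delta> m T) x xi = 1/2 * (D_form x xi (\<lambda>w. ia_form x (\<lambda>v. c v w)) + C * (- t + (xi \<bullet> et) * ia_form x b))"
    unfolding ia_eq_ia_form
    by (simp add: ia_form_add ia_form_cmult ia_form_D_form_swap ia_form_D_form_vanish ia_form_et)
  have "Dop (ia T) x xi = D_form x xi (\<lambda>w. 1/2 * (ia_form x (\<lambda>v. c v w) + ia_form0 w b))"
    unfolding Dop_eq_D_form by (rule D_form_cong) (simp add: deriv_x_ia[OF poly_T] b_def c_def)
  also have "\<dots> = 1/2 * (D_form x xi (\<lambda>w. ia_form x (\<lambda>v. c v w)) + (\<Sum>v\<in>Basis. (xi \<bullet> v) * b v)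
      + (xi \<bullet> et) * ia_form x b)"
    by (simp only: D_form_cmult D_form_add D_form_ia_form0 add.assoc)
  also have "(\<Sum>v\<in>Basis. (xi \<bullet> v) * b v) = real m * t"
    unfolding b_def t_def by (rule homog_euler[OF T])
  finally have Dop_ia: "Dop (ia T) x xi = 1/2 * (D_form x xi (\<lambda>w. ia_form x (\<lambda>v. c v w)) + real m * t
      + (xi \<bullet> et) * ia_form x b)" .
  have ia_T: "ia T x xi = 1/2 * ia_form x b"
    unfolding ia_eq_ia_form b_def ..
  have "real (m - 1) = real m - 1 \<or> ia_form x b = 0"
    by (cases m) (use T in \<open>simp_all add: b_def deriv_xi_homog_0 ia_form_def ia_form0_def\<close>)
  then show ?thesis
    unfolding lhs Xop_eq[of _ "m - 1"] Dop_ia ia_T by (auto simp: C_def t_def algebra_simps)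
qed

lemma Xop_linear:
  fixes T U :: "'n::finite sym"
  assumes "poly_symbol T" and "poly_symbol U"
  shows "Xop \<delta> k (\<lambda>x xi. T x xi + c * U x xi) x xi = Xop \<delta> k T x xi + c * Xop \<delta> k U x xi"
proof -
  have "D_form x xi (\<lambda>w. deriv_x w (\<lambda>x xi. T x xi + c * U x xi) x xi)
      = D_form x xi (\<lambda>w. deriv_x w T x xi + c * deriv_x w U x xi)"
    using assms by (intro D_form_cong) simp
  then show ?thesis
    unfolding Xop_eq Dop_eq_D_form by (simp add: D_form_add D_form_cmult algebra_simps)
qed

lemma ia_linear_sum:
  fixes F :: "'i \<Rightarrow> 'n::finite sym"
  assumes "\<And>l. l \<in> I \<Longrightarrow> poly_symbol (F l)"
  shows "ia (\<lambda>x xi. \<Sum>l\<in>I. c l * F l x xi) x xi = (\<Sum>l\<in>I. c l * ia (F l) x xi)"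
  unfolding ia_eq_ia_form using assms
  by (simp add: ia_form_sum ia_form_cmult sum_distrib_left algebra_simps)

lemma rr_Suc: "rr n \<delta> (Suc l) m = rr n \<delta> l m - ((real n + 1) * \<delta> + real (m + l))"
  unfolding rr_def by (simp add: field_simps)

lemma ia_Xpow:
  fixes T :: "'n::finite sym"
  assumes T: "homog m T"
  shows "ia (Xpow \<delta> m l T) x xi = Xpow \<delta> (m - 1) l (ia T) x xi + rr CARD('n) \<delta> l m * Xpow \<delta> m (l - 1) T x xi"
proof (induction l arbitrary: x xi)
  case 0
  then show ?case
    by (simp add: rr_def)
next
  case (Suc l)
  have poly_ia: "poly_symbol (Xpow \<delta> (m - 1) l (ia T))" and poly_T: "poly_symbol (Xpow \<delta> m (l - 1) T)"
    using T by (blast intro: poly_symbol_homog homog_Xpow homog_ia)+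
  have "ia (Xpow \<delta> m (Suc l) T) x xi
      = Xop \<delta> (m + l - 1) (ia (Xpow \<delta> m l T)) x xi - ((real CARD('n) + 1) * \<delta> + real (m + l)) * Xpow \<delta> m l T x xi"
    using ia_Xop_commutator[OF homog_Xpow[OF T]] by simp
  also have "Xop \<delta> (m + l - 1) (ia (Xpow \<delta> m l T)) x xi
      = Xop \<delta> (m + l - 1) (Xpow \<delta> (m - 1) l (ia T)) x xi
        + rr CARD('n) \<delta> l m * Xop \<delta> (m + l - 1) (Xpow \<delta> m (l - 1) T) x xi"
    unfolding Suc.IH[abs_def] by (rule Xop_linear[OF poly_ia poly_T])
  also have "Xop \<delta> (m + l - 1) (Xpow \<delta> (m - 1) l (ia T)) x xi = Xpow \<delta> (m - 1) (Suc l) (ia T) x xi"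
    by (cases m) (use T in \<open>simp_all add: ia_homog_0 Xpow_zero Xop_zero\<close>)
  also have "rr CARD('n) \<delta> l m * Xop \<delta> (m + l - 1) (Xpow \<delta> m (l - 1) T) x xi
      = rr CARD('n) \<delta> l m * Xpow \<delta> m l T x xi"
    by (cases l) (simp_all add: rr_def)
  finally show ?case
    by (simp add: rr_Suc algebra_simps)
qed

lemma rr_nonzero:
  assumes "\<delta> \<notin> Iset n k" and "1 \<le> l" and "l \<le> k"
  shows "rr n \<delta> l (k - l) \<noteq> 0"
proof
  assume "rr n \<delta> l (k - l) = 0"
  then have "2 * (real n + 1) * \<delta> + 2 * real (k - l) + real l - 1 = 0"
    unfolding rr_def using assms(2) by simp
  then have "\<delta> = - real (2 * k - l - 1) / (2 * (real n + 1))"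
    using assms(2,3) by (simp add: of_nat_diff field_simps)
  moreover have "2 * k - l - 1 \<in> {k - 1 .. 2 * k - 2}"
    using assms(2,3) by auto
  ultimately show False
    using assms(1) unfolding Iset_def by blast
qed

lemma bb_recurrence:
  assumes "1 \<le> l" and "rr n \<delta> l (k - l) \<noteq> 0"
  shows "- bb n \<delta> k l * rr n \<delta> l (k - l) = bb n \<delta> k (l - 1)"
proof -
  obtain j where l: "l = Suc j"
    using assms(1) by (cases l) auto
  have "(\<Prod>i=1..l. - rr n \<delta> i (k - i)) = (\<Prod>i=1..j. - rr n \<delta> i (k - i)) * (- rr n \<delta> l (k - l))"
    unfolding l by (simp add: prod.cl_ivl_Suc)
  then show ?thesis
    unfolding bb_def using assms(2) l by (simp add: field_simps)
qed

definition telescope_term :: "real \<Rightarrow> nat \<Rightarrow> 'n::finite sym \<Rightarrow> nat \<Rightarrow> 'n sym" where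
  "telescope_term \<delta> k S l = (\<lambda>x xi. bb CARD('n) \<delta> k l * Xpow \<delta> (k - 1 - l) l ((ia ^^ l) S) x xi)"

lemma homog_s_op_summand:
  fixes S :: "'n::finite sym"
  assumes "homog (k - 1) S" and "1 \<le> l" and "l \<le> k"
  shows "homog k (Xpow \<delta> (k - l) l ((ia ^^ (l - 1)) S))"
proof -
  have "homog (k - l) ((ia ^^ (l - 1)) S)"
    using homog_ia_power[OF assms(1), of "l - 1"] assms(2) by (simp add: diff_diff_add)
  from homog_Xpow[OF this, of l \<delta>] show ?thesis
    using assms(3) by simp
qed

lemma ia_s_op_summand:
  fixes S :: "'n::finite sym"
  assumes S: "homog (k - 1) S" and \<delta>: "\<delta> \<notin> Iset CARD('n) k" and l: "1 \<le> l" "l \<le> k"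
  shows "- bb CARD('n) \<delta> k l * ia (Xpow \<delta> (k - l) l ((ia ^^ (l - 1)) S)) x xi
    = telescope_term \<delta> k S (l - 1) x xi - telescope_term \<delta> k S l x xi"
proof -
  define r where "r = rr CARD('n) \<delta> l (k - l)"
  have "homog (k - l) ((ia ^^ (l - 1)) S)"
    using homog_ia_power[OF S, of "l - 1"] l by (simp add: diff_diff_add)
  then have "ia (Xpow \<delta> (k - l) l ((ia ^^ (l - 1)) S)) x xi
      = Xpow \<delta> (k - l - 1) l (ia ((ia ^^ (l - 1)) S)) x xi + r * Xpow \<delta> (k - l) (l - 1) ((ia ^^ (l - 1)) S) x xi"
    unfolding r_def by (rule ia_Xpow)
  also have "\<dots> = Xpow \<delta> (k - 1 - l) l ((ia ^^ l) S) x xi + r * Xpow \<delta> (k - 1 - (l - 1)) (l - 1) ((ia ^^ (l - 1)) S) x xi"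
    using l by (cases l) (simp_all add: diff_diff_add)
  moreover have "bb CARD('n) \<delta> k (l - 1) = - bb CARD('n) \<delta> k l * r"
    unfolding r_def using bb_recurrence rr_nonzero \<delta> l by metis
  ultimately show ?thesis
    unfolding telescope_term_def by (simp add: algebra_simps)
qed

theorem lemma5p1:
  fixes \<delta> :: real and k :: nat and S :: "'n::finite sym"
  assumes "k \<ge> 1"
    and "\<delta> \<notin> Iset CARD('n) k"
    and "S \<in> Rsp (k - 1)"
  shows "ia (s_op \<delta> k S) = S"
proof (intro ext)
  fix x xi :: "'n pt"
  have S: "homog (k - 1) S"
    using assms(3) by (rule homog_if_Rsp)
  have "s_op \<delta> k S = (\<lambda>x xi. \<Sum>l=1..k. - bb CARD('n) \<delta> k l * Xpow \<delta> (k - l) l ((ia ^^ (l - 1)) S) x xi)"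
    unfolding s_op_def by (simp add: sum_negf)
  then have "ia (s_op \<delta> k S) x xi
      = (\<Sum>l=1..k. - bb CARD('n) \<delta> k l * ia (Xpow \<delta> (k - l) l ((ia ^^ (l - 1)) S)) x xi)"
    by (simp only:) (rule ia_linear_sum, rule poly_symbol_homog, rule homog_s_op_summand[OF S], auto)
  also have "\<dots> = (\<Sum>l=1..k. telescope_term \<delta> k S (l - 1) x xi - telescope_term \<delta> k S l x xi)"
    using ia_s_op_summand[OF S assms(2)] by (intro sum.cong) auto
  also have "\<dots> = telescope_term \<delta> k S 0 x xi - telescope_term \<delta> k S k x xi"
    using sum_telescope''[of 0 k "\<lambda>l. telescope_term \<delta> k S l x xi"] by (simp add: sum_subtractf)
  also have "(ia ^^ k) S = (\<lambda>x xi. 0)"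
    using homog_ia_power[OF S, of "k - 1"] assms(1) by (cases k) (simp_all add: ia_homog_0)
  then have "telescope_term \<delta> k S 0 x xi - telescope_term \<delta> k S k x xi = S x xi"
    by (simp add: telescope_term_def bb_def Xpow_zero)
  finally show "ia (s_op \<delta> k S) x xi = S x xi" .
qed

end
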